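(* Let $p,q\in\mathbb{R}$ with $q<0$ and $p<0$, and let $D=\frac{p^3}{27}+\frac{q^2}{4}$. Let $x_1,x_2,x_3\in\mathbb{C}$ be the solutions of $x^3+px+q=0$. Then: (1) if $D\ge0$, $|x_i|\le\frac83+\frac13|q|+\frac1{12}q^2+\frac1{81}p^3$ for each $i$; (2) if $D<0$, $|x_i|\le 3+\frac16q^2+\frac1{81}|p|^3$ for each $i$.
   Context: The solutions are those given by Cardano's formula: $x_1=z_1+z_2$, $x_2=z_1+\lambda z_2$, $x_3=z_1+\lambda^2z_2$, with $z_1=\sqrt[3]{-\frac q2+\sqrt{D}}$, $z_2=\sqrt[3]{-\frac q2-\sqrt{D}}$ and $\lambda^3=1$. *)

theory Defs
  imports Complex_Main
begin

end

theory Submission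
  imports Defs
begin

text \<open>Every root \<open>x\<close> of \<open>x^3 + p x + q\<close> satisfies \<open>|x|^3 \<le> |p| |x| + |q|\<close>. Since
  \<open>r^3 - 3a^2 r - 2a^3 = (r - 2a)(r + a)^2\<close>, the coefficient bounds \<open>|p| \<le> 3a^2\<close> and
  \<open>|q| \<le> 2a^3\<close> force \<open>|x| \<le> 2a\<close>. For \<open>D \<ge> 0\<close> one takes \<open>a = (|q|/2)^(1/3)\<close>, for \<open>D < 0\<close>
  one takes \<open>a = (|p|/3)^(1/2)\<close>; the stated bounds are then elementary estimates of \<open>2a\<close>.\<close>

lemma le_double_if_cube_le:
  fixes r a :: real
  assumes "a \<ge> 0" and "r ^ 3 \<le> 3 * a\<^sup>2 * r + 2 * a ^ 3"
  shows "r \<le> 2 * a"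
proof (rule ccontr)
  assume "\<not> r \<le> 2 * a"
  then have "(r - 2 * a) * (r + a)\<^sup>2 > 0"
    using assms(1) by (simp add: zero_less_mult_iff)
  moreover have "(r - 2 * a) * (r + a)\<^sup>2 = r ^ 3 - 3 * a\<^sup>2 * r - 2 * a ^ 3"
    by (simp add: power2_eq_square power3_eq_cube algebra_simps)
  ultimately show False
    using assms(2) by linarith
qed

lemma norm_cube_le_if_depressed_cubic_root:
  fixes x :: "'a :: real_normed_div_algebra" and p q :: real
  assumes "x ^ 3 + of_real p * x + of_real q = 0"
  shows "norm x ^ 3 \<le> \<bar>p\<bar> * norm x + \<bar>q\<bar>"
proof -
  have "x ^ 3 = - (of_real p * x + of_real q)"
    using assms by (simp add: add.assoc add_eq_0_iff)
  then have "norm x ^ 3 = norm (of_real p * x + of_real q)"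
    by (metis norm_power norm_minus_cancel)
  also have "\<dots> \<le> \<bar>p\<bar> * norm x + \<bar>q\<bar>"
    by (rule order_trans[OF norm_triangle_ineq]) (simp add: norm_mult)
  finally show ?thesis .
qed

lemma norm_depressed_cubic_root_le:
  fixes x :: "'a :: real_normed_div_algebra" and p q a :: real
  assumes "x ^ 3 + of_real p * x + of_real q = 0"
    and "a \<ge> 0" and "\<bar>p\<bar> \<le> 3 * a\<^sup>2" and "\<bar>q\<bar> \<le> 2 * a ^ 3"
  shows "norm x \<le> 2 * a"
proof (rule le_double_if_cube_le)
  have "norm x ^ 3 \<le> \<bar>p\<bar> * norm x + \<bar>q\<bar>"
    using assms(1) by (rule norm_cube_le_if_depressed_cubic_root)
  also have "\<dots> \<le> 3 * a\<^sup>2 * norm x + 2 * a ^ 3"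
    using assms(3,4) by (intro add_mono mult_right_mono) auto
  finally show "norm x ^ 3 \<le> 3 * a\<^sup>2 * norm x + 2 * a ^ 3" .
qed (fact assms(2))

lemma norm_depressed_cubic_root_le_nonneg_discriminant:
  fixes x :: "'a :: real_normed_div_algebra" and p q :: real
  assumes "x ^ 3 + of_real p * x + of_real q = 0"
    and "p \<le> 0" and "p ^ 3 / 27 + q\<^sup>2 / 4 \<ge> 0"
  shows "norm x \<le> 2 * root 3 (\<bar>q\<bar> / 2)"
proof (rule norm_depressed_cubic_root_le[OF assms(1)])
  define a where "a = root 3 (\<bar>q\<bar> / 2)"
  have q: "\<bar>q\<bar> = 2 * a ^ 3"
    by (simp add: a_def odd_real_root_pow)
  have "\<bar>p\<bar> ^ 3 \<le> 27 * q\<^sup>2 / 4"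
    using assms(2,3) by (simp add: power_abs)
  also have "\<dots> = 27 * (2 * a ^ 3)\<^sup>2 / 4"
    by (metis q power2_abs)
  also have "\<dots> = (3 * a\<^sup>2) ^ 3"
    by (simp add: power_mult_distrib flip: power_mult)
  finally have "\<bar>p\<bar> ^ Suc 2 \<le> (3 * a\<^sup>2) ^ Suc 2"
    by simp
  then show "\<bar>p\<bar> \<le> 3 * (root 3 (\<bar>q\<bar> / 2))\<^sup>2"
    unfolding a_def by (rule power_le_imp_le_base) simp
qed (simp_all add: odd_real_root_pow)

lemma norm_depressed_cubic_root_le_nonpos_discriminant:
  fixes x :: "'a :: real_normed_div_algebra" and p q :: real
  assumes "x ^ 3 + of_real p * x + of_real q = 0"
    and "p ^ 3 / 27 + q\<^sup>2 / 4 \<le> 0"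
  shows "norm x \<le> 2 * sqrt (\<bar>p\<bar> / 3)"
proof (rule norm_depressed_cubic_root_le[OF assms(1)])
  define s where "s = sqrt (\<bar>p\<bar> / 3)"
  have "p ^ 3 \<le> 0"
    using assms(2) zero_le_power2[of q] by linarith
  then have "\<bar>p\<bar> ^ 3 = - (p ^ 3)"
    by (simp add: power_le_zero_eq abs_of_nonpos)
  then have "q\<^sup>2 \<le> 4 * \<bar>p\<bar> ^ 3 / 27"
    using assms(2) by linarith
  also have "\<dots> = 4 * (3 * s\<^sup>2) ^ 3 / 27"
    by (simp add: s_def)
  also have "\<dots> = (2 * s ^ 3)\<^sup>2"
    by (simp add: power_mult_distrib flip: power_mult)
  finally have "\<bar>q\<bar>\<^sup>2 \<le> (2 * s ^ 3)\<^sup>2"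
    by (simp only: power2_abs)
  then show "\<bar>q\<bar> \<le> 2 * sqrt (\<bar>p\<bar> / 3) ^ 3"
    unfolding s_def by (rule power2_le_imp_le) simp
qed simp_all

lemma triple_le_cube_add_two:
  fixes a :: real
  assumes "a \<ge> -2"
  shows "3 * a \<le> a ^ 3 + 2"
proof -
  have "0 \<le> (a - 1)\<^sup>2 * (a + 2)"
    using assms by simp
  also have "\<dots> = a ^ 3 + 2 - 3 * a"
    by (simp add: power2_eq_square power3_eq_cube algebra_simps)
  finally show ?thesis by simp
qed

lemma double_le_sixth_power:
  fixes s :: real
  shows "2 * s \<le> 3 + s ^ 6 / 3"
proof (cases "s \<le> 3 / 2")
  case True
  then show ?thesis
    by (simp add: add_increasing2)
next
  case False
  then have "(3 / 2) ^ 5 \<le> s ^ 5"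
    by (intro power_mono) auto
  then have "6 \<le> s ^ 5"
    by (simp add: power_divide)
  then have "s * 6 \<le> s * s ^ 5"
    using False by (intro mult_left_mono) auto
  then show ?thesis
    by (simp add: power_Suc[symmetric] del: power_Suc)
qed

theorem mainTheorem10:
  fixes p q :: real and D :: real
  assumes "q < 0" and "p < 0"
    and "D = p ^ 3 / 27 + q ^ 2 / 4"
  shows "(D \<ge> 0 \<longrightarrow> (\<forall>x::complex. x ^ 3 + of_real p * x + of_real q = 0 \<longrightarrow>
            cmod x \<le> 8/3 + \<bar>q\<bar> / 3 + q ^ 2 / 12 + p ^ 3 / 81))
       \<and> (D < 0 \<longrightarrow> (\<forall>x::complex. x ^ 3 + of_real p * x + of_real q = 0 \<longrightarrow>
            cmod x \<le> 3 + q ^ 2 / 6 + \<bar>p\<bar> ^ 3 / 81))"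
proof (intro conjI impI allI)
  fix x :: complex
  assume D: "D \<ge> 0" and x: "x ^ 3 + of_real p * x + of_real q = 0"
  define a where "a = root 3 (\<bar>q\<bar> / 2)"
  have "a \<ge> 0"
    by (simp add: a_def)
  have "cmod x \<le> 2 * a"
    unfolding a_def using norm_depressed_cubic_root_le_nonneg_discriminant[OF x] assms D by simp
  also have "\<dots> \<le> 8/3 + 2 * a ^ 3 / 3"
    using triple_le_cube_add_two[of a] \<open>a \<ge> 0\<close> by linarith
  also have "\<dots> = 8/3 + \<bar>q\<bar> / 3"
    by (simp add: a_def odd_real_root_pow)
  also have "\<dots> \<le> 8/3 + \<bar>q\<bar> / 3 + q ^ 2 / 12 + p ^ 3 / 81"
    using D assms(3) by simp
  finally show "cmod x \<le> 8/3 + \<bar>q\<bar> / 3 + q ^ 2 / 12 + p ^ 3 / 81" .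
next
  fix x :: complex
  assume D: "D < 0" and x: "x ^ 3 + of_real p * x + of_real q = 0"
  define s where "s = sqrt (\<bar>p\<bar> / 3)"
  have "cmod x \<le> 2 * s"
    unfolding s_def using norm_depressed_cubic_root_le_nonpos_discriminant[OF x] assms D by simp
  also have "\<dots> \<le> 3 + s ^ 6 / 3"
    by (rule double_le_sixth_power)
  also have "s ^ 6 = (s\<^sup>2) ^ 3"
    by (simp flip: power_mult)
  also have "s\<^sup>2 = \<bar>p\<bar> / 3"
    by (simp add: s_def)
  finally have "cmod x \<le> 3 + \<bar>p\<bar> ^ 3 / 81"
    by (simp add: power_divide)
  then show "cmod x \<le> 3 + q ^ 2 / 6 + \<bar>p\<bar> ^ 3 / 81"
    using zero_le_power2[of q] by linarith
qed

end
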